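(* Let $3\le p<\omega$ and $0\le n<\omega$. If $2n>p$, then $\mathfrak L(p,n)$ is not representable, i.e. $\mathfrak L(p,n)\notin\mathsf{RRA}$.
   Context: For $3\le p<\omega$, $0\le n<\omega$, $\mathfrak L(p,n)$ is the finite symmetric integral relation algebra with atoms $1',a_0,\dots,a_p,t_1,\dots,t_n$ whose composition of atoms is given, for $0\le i,j\le p$, $i\ne j$, $1\le k,l\le n$, $k\ne l$, by: $a_i;a_i=1'+a_i$; $a_i;a_j=0'\cdot\overline{a_i+a_j}$ (where $0'=\overline{1'}$); $a_i;t_k=t_1+\cdots+t_n$; $t_k;t_k=1'+a_0+\cdots+a_p$; $t_k;t_l=a_0+\cdots+a_p$. $\mathsf{RRA}$ is the class of relation algebras having a representation, i.e. an injective map into $\mathcal P(U)$ for an equivalence relation $U$ on some set, sending the Boolean operations to set operations relative to $U$, $1'$ to the identity relation, converse to relational converse and $;$ to relational composition. *)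

theory Defs
  imports Main
begin

datatype atom = One | A nat | T nat

definition As :: "nat \<Rightarrow> atom set" where
  "As p = A ` {0..p}"

definition Ts :: "nat \<Rightarrow> atom set" where
  "Ts n = T ` {1..n}"

definition At :: "nat \<Rightarrow> nat \<Rightarrow> atom set" where
  "At p n = {One} \<union> As p \<union> Ts n"

text \<open>Composition of atoms (elements of the algebra are subsets of At p n;
  the empty set is 0 and At p n is 1).\<close>
fun atcomp :: "nat \<Rightarrow> nat \<Rightarrow> atom \<Rightarrow> atom \<Rightarrow> atom set" where
  "atcomp p n One b = {b}"
| "atcomp p n (A i) One = {A i}"
| "atcomp p n (T k) One = {T k}"
| "atcomp p n (A i) (A j) =
     (if i = j then {One, A i} else At p n - {One, A i, A j})"
| "atcomp p n (A i) (T k) = Ts n"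
| "atcomp p n (T k) (A i) = Ts n"
| "atcomp p n (T k) (T l) = (if k = l then {One} \<union> As p else As p)"

definition comp :: "nat \<Rightarrow> nat \<Rightarrow> atom set \<Rightarrow> atom set \<Rightarrow> atom set" where
  "comp p n x y = (\<Union>a\<in>x. \<Union>b\<in>y. atcomp p n a b)"

definition conv :: "atom set \<Rightarrow> atom set" where
  "conv x = x"

definition representation ::
  "nat \<Rightarrow> nat \<Rightarrow> ('u \<times> 'u) set \<Rightarrow> (atom set \<Rightarrow> ('u \<times> 'u) set) \<Rightarrow> bool" where
  "representation p n U h \<longleftrightarrow>
     equiv (Field U) U \<and>
     inj_on h (Pow (At p n)) \<and>
     (\<forall>x\<in>Pow (At p n). h x \<subseteq> U) \<and>
     (\<forall>x\<in>Pow (At p n). \<forall>y\<in>Pow (At p n).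
        h (x \<union> y) = h x \<union> h y \<and> h (x \<inter> y) = h x \<inter> h y) \<and>
     (\<forall>x\<in>Pow (At p n). h (At p n - x) = U - h x) \<and>
     h {} = {} \<and> h (At p n) = U \<and>
     h {One} = Id_on (Field U) \<and>
     (\<forall>x\<in>Pow (At p n). h (conv x) = (h x)\<inverse>) \<and>
     (\<forall>x\<in>Pow (At p n). \<forall>y\<in>Pow (At p n). h (comp p n x y) = h x O h y)"

end

theory Submission
  imports Defs
begin

text \<open>Take x t_1 y and, since a_1;t_1 contains t_1, a point w with x a_1 w t_1 y.
  Count the points z with z = x or x a_0 z that are t-related to y. Each of them is
  a_i-related to w for some i > 0, because t;t is below 1' + a_0 + ... + a_p, while 1' or a_0
  would put w into the a_0-class of x; and different points give different i, because
  a_i;a_i is below 1' + a_i while two such points are a_0-related. So there are at most p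
  of them. On the other hand, a_0;t_k contains t_l, and applying this twice yields for every
  k two of them that are t_k-related to y. Hence 2n is at most p.\<close>

lemma At_simps [simp]:
  "One \<in> At p n" "A i \<in> At p n \<longleftrightarrow> i \<le> p" "T k \<in> At p n \<longleftrightarrow> 1 \<le> k \<and> k \<le> n"
  by (auto simp: At_def As_def Ts_def)

lemma finite_At: "finite (At p n)"
  by (simp add: At_def As_def Ts_def)

lemma atcomp_subset_At: "a \<in> At p n \<Longrightarrow> b \<in> At p n \<Longrightarrow> atcomp p n a b \<subseteq> At p n"
  by (cases a; cases b) (auto simp: At_def As_def Ts_def)

lemma card_le_if_unique_labels:
  assumes "finite I"
    and labelled: "\<forall>z\<in>C. \<exists>i\<in>I. P z i"
    and unique: "\<And>i z z'. i \<in> I \<Longrightarrow> z \<in> C \<Longrightarrow> z' \<in> C \<Longrightarrow> P z i \<Longrightarrow> P z' i \<Longrightarrow> z = z'"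
  shows "finite C" and "card C \<le> card I"
proof -
  obtain f where f: "\<forall>z\<in>C. f z \<in> I \<and> P z (f z)"
    using bchoice[OF labelled[unfolded Bex_def]] by blast
  have inj: "inj_on f C"
  proof (rule inj_onI)
    fix z z' assume "z \<in> C" "z' \<in> C" "f z = f z'"
    then show "z = z'"
      using f unique[of "f z" z z'] by auto
  qed
  have image: "f ` C \<subseteq> I"
    using f by blast
  show "finite C"
    using finite_imageD[OF finite_subset[OF image \<open>finite I\<close>] inj] .
  show "card C \<le> card I"
    using card_inj_on_le[OF inj image \<open>finite I\<close>] .
qed

locale L_representation =
  fixes p n :: nat and U :: "('u \<times> 'u) set" and h :: "atom set \<Rightarrow> ('u \<times> 'u) set"
  assumes representation: "representation p n U h"
begin

lemma h_Un: "x \<subseteq> At p n \<Longrightarrow> y \<subseteq> At p n \<Longrightarrow> h (x \<union> y) = h x \<union> h y"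
  and h_Int: "x \<subseteq> At p n \<Longrightarrow> y \<subseteq> At p n \<Longrightarrow> h (x \<inter> y) = h x \<inter> h y"
  using representation by (auto simp: representation_def)

lemma h_mono:
  assumes "x \<subseteq> y" "y \<subseteq> At p n"
  shows "h x \<subseteq> h y"
proof -
  have "h y = h x \<union> h y"
    using h_Un[of x y] assms by (simp add: sup.absorb2 subset_trans)
  then show ?thesis by blast
qed

lemma h_eq_UN_atoms: "x \<subseteq> At p n \<Longrightarrow> h x = (\<Union>a\<in>x. h {a})"
proof (induction x rule: infinite_finite_induct)
  case (infinite x)
  then show ?case using finite_subset[OF _ finite_At] by blast
next
  case empty
  then show ?case using representation by (simp add: representation_def)
next
  case (insert a x)
  then show ?case using h_Un[of "{a}" x] by simp
qed

lemma atoms_disjoint: "a \<in> At p n \<Longrightarrow> b \<in> At p n \<Longrightarrow> a \<noteq> b \<Longrightarrow> h {a} \<inter> h {b} = {}"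
  using h_Int[of "{a}" "{b}"] representation by (simp add: representation_def)

lemma h_One: "h {One} = Id_on (Field U)"
  using representation by (simp add: representation_def)

lemma h_atom_subset: "a \<in> At p n \<Longrightarrow> h {a} \<subseteq> U"
  using representation by (simp add: representation_def)

lemma h_atom_sym: "a \<in> At p n \<Longrightarrow> (x, y) \<in> h {a} \<Longrightarrow> (y, x) \<in> h {a}"
  using representation by (auto simp: representation_def conv_def)

lemma h_atom_comp:
  assumes "a \<in> At p n" "b \<in> At p n"
  shows "h {a} O h {b} = h (atcomp p n a b)"
proof -
  have "h (comp p n {a} {b}) = h {a} O h {b}"
    using representation assms unfolding representation_def by blast
  then show ?thesis by (simp add: comp_def)
qed

lemma Field_nonempty: "\<exists>x. x \<in> Field U"
proof (rule ccontr)
  assume "\<nexists>x. x \<in> Field U"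
  then have "h (At p n) = h {}"
    using representation by (auto simp: representation_def Field_def)
  moreover have "inj_on h (Pow (At p n))"
    using representation by (simp add: representation_def)
  ultimately have "At p n = {}"
    by (auto dest: inj_onD)
  then show False
    using At_simps(1) by blast
qed

lemma A_irrefl: "i \<le> p \<Longrightarrow> (x, x) \<notin> h {A i}"
  using h_atom_subset[of "A i"] atoms_disjoint[of One "A i"] h_One by (auto simp: Field_def)

lemma A_trans:
  assumes "i \<le> p" "(x, y) \<in> h {A i}" "(y, z) \<in> h {A i}"
  shows "x = z \<or> (x, z) \<in> h {A i}"
proof -
  have "(x, z) \<in> h {A i} O h {A i}"
    using assms by blast
  also have "\<dots> = h {One, A i}"
    using h_atom_comp[of "A i" "A i"] \<open>i \<le> p\<close> by simp
  also have "\<dots> = Id_on (Field U) \<union> h {A i}"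
    using h_eq_UN_atoms[of "{One, A i}"] \<open>i \<le> p\<close> by (simp add: h_One)
  finally show ?thesis
    by auto
qed

lemma T_T_path_cases:
  assumes "k \<in> {1..n}" "l \<in> {1..n}" "(x, y) \<in> h {T k}" "(y, z) \<in> h {T l}"
  shows "x = z \<or> (\<exists>i\<le>p. (x, z) \<in> h {A i})"
proof -
  have "(x, z) \<in> h (atcomp p n (T k) (T l))"
    using h_atom_comp[of "T k" "T l"] assms by auto
  also have "\<dots> \<subseteq> h ({One} \<union> As p)"
    by (rule h_mono) (auto simp: At_def)
  also have "\<dots> = (\<Union>a\<in>{One} \<union> As p. h {a})"
    by (rule h_eq_UN_atoms) (auto simp: At_def)
  finally show ?thesis
    by (auto simp: As_def h_One)
qed

lemma T_factor_through_A:
  assumes "i \<le> p" "k \<in> {1..n}" "l \<in> {1..n}" "(x, y) \<in> h {T l}"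
  shows "\<exists>z. (x, z) \<in> h {A i} \<and> (z, y) \<in> h {T k}"
proof -
  have "(x, y) \<in> h (Ts n)"
    using h_mono[of "{T l}" "Ts n"] assms by (auto simp: Ts_def At_def)
  also have "h (Ts n) = h {A i} O h {T k}"
    using h_atom_comp[of "A i" "T k"] assms by simp
  finally show ?thesis by blast
qed

lemma T_exists:
  assumes "x \<in> Field U" "k \<in> {1..n}"
  shows "\<exists>y. (x, y) \<in> h {T k}"
proof -
  have "(x, x) \<in> h {One}"
    using Id_onI[OF assms(1)] by (simp add: h_One)
  also have "\<dots> \<subseteq> h (atcomp p n (T k) (T k))"
    using assms by (intro h_mono atcomp_subset_At) auto
  also have "\<dots> = h {T k} O h {T k}"
    using h_atom_comp[of "T k" "T k"] assms by simp
  finally show ?thesis by blast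
qed

definition A0_class :: "'u \<Rightarrow> 'u set" where
  "A0_class x = insert x {z. (x, z) \<in> h {A 0}}"

lemma A0_class_closed: "z \<in> A0_class x \<Longrightarrow> (z, w) \<in> h {A 0} \<Longrightarrow> w \<in> A0_class x"
  using A_trans[of 0 x z w] by (auto simp: A0_class_def)

lemma A0_class_pairwise:
  assumes "z \<in> A0_class x" "z' \<in> A0_class x" "z \<noteq> z'"
  shows "(z, z') \<in> h {A 0}"
  using assms A_trans[of 0 z x z'] h_atom_sym[of "A 0" x z] by (auto simp: A0_class_def)

lemma A1_not_in_A0_class: "1 \<le> p \<Longrightarrow> (x, w) \<in> h {A 1} \<Longrightarrow> w \<notin> A0_class x"
  using A_irrefl[of 1 x] atoms_disjoint[of "A 0" "A 1"] by (auto simp: A0_class_def)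

definition fan :: "'u \<Rightarrow> 'u \<Rightarrow> 'u set" where
  "fan x y = {z \<in> A0_class x. \<exists>k\<in>{1..n}. (z, y) \<in> h {T k}}"

lemma fan_finite_card_le:
  assumes "1 \<le> p" "(x, w) \<in> h {A 1}" "(w, y) \<in> h {T l}" "l \<in> {1..n}"
  shows "finite (fan x y)" and "card (fan x y) \<le> p"
proof -
  have w_outside: "w \<notin> A0_class x"
    using A1_not_in_A0_class assms(1,2) .
  have labelled: "\<forall>z\<in>fan x y. \<exists>i\<in>{1..p}. (z, w) \<in> h {A i}"
  proof
    fix z assume "z \<in> fan x y"
    then obtain k where z: "z \<in> A0_class x" "k \<in> {1..n}" "(z, y) \<in> h {T k}"
      by (auto simp: fan_def)
    then have "z = w \<or> (\<exists>i\<le>p. (z, w) \<in> h {A i})"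
      using T_T_path_cases[of k l z y w] h_atom_sym[of "T l" w y] assms by auto
    moreover have "z \<noteq> w" and "(z, w) \<notin> h {A 0}"
      using z(1) w_outside A0_class_closed by auto
    ultimately show "\<exists>i\<in>{1..p}. (z, w) \<in> h {A i}"
      by (metis atLeastAtMost_iff less_one not_le)
  qed
  have unique: "z = z'"
    if "i \<in> {1..p}" "z \<in> fan x y" "z' \<in> fan x y" "(z, w) \<in> h {A i}" "(z', w) \<in> h {A i}"
    for i z z'
  proof (rule ccontr)
    assume "z \<noteq> z'"
    then have "(z, z') \<in> h {A i}"
      using that A_trans[of i z w z'] h_atom_sym[of "A i" z' w] by auto
    moreover have "(z, z') \<in> h {A 0}"
      using that \<open>z \<noteq> z'\<close> A0_class_pairwise by (auto simp: fan_def)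
    ultimately show False
      using that atoms_disjoint[of "A 0" "A i"] by auto
  qed
  show "finite (fan x y)"
    using card_le_if_unique_labels(1)[OF _ labelled unique] by simp
  show "card (fan x y) \<le> p"
    using card_le_if_unique_labels(2)[OF _ labelled unique] by simp
qed

lemma two_T_neighbours_in_A0_class:
  assumes "(x, y) \<in> h {T l}" "l \<in> {1..n}" "k \<in> {1..n}"
  obtains z z' where "z \<noteq> z'" "z \<in> A0_class x" "z' \<in> A0_class x"
    "(z, y) \<in> h {T k}" "(z', y) \<in> h {T k}"
proof -
  obtain z where z: "(x, z) \<in> h {A 0}" "(z, y) \<in> h {T k}"
    using T_factor_through_A[of 0 k l x y] assms by auto
  obtain z' where z': "(z, z') \<in> h {A 0}" "(z', y) \<in> h {T k}"
    using T_factor_through_A[of 0 k k z y] z assms by auto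
  have "z \<in> A0_class x"
    using z by (simp add: A0_class_def)
  moreover have "z' \<in> A0_class x"
    using A0_class_closed calculation z' by blast
  moreover have "z \<noteq> z'"
    using z' A_irrefl[of 0 z] by auto
  ultimately show thesis
    using that z z' by blast
qed

lemma fan_card_ge:
  assumes "finite (fan x y)" "(x, y) \<in> h {T l}" "l \<in> {1..n}"
  shows "2 * n \<le> card (fan x y)"
proof -
  define L where "L k = {z \<in> fan x y. (z, y) \<in> h {T k}}" for k
  have card_L: "2 \<le> card (L k)" if k: "k \<in> {1..n}" for k
  proof -
    obtain z z' where "z \<noteq> z'" "z \<in> A0_class x" "z' \<in> A0_class x"
      "(z, y) \<in> h {T k}" "(z', y) \<in> h {T k}"
      using two_T_neighbours_in_A0_class[OF assms(2,3) k] .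
    then have "z \<noteq> z'" "{z, z'} \<subseteq> L k"
      using k by (auto simp: L_def fan_def)
    then show ?thesis
      using card_mono[of "L k" "{z, z'}"] assms(1) by (auto simp: L_def)
  qed
  have "2 * n = (\<Sum>k\<in>{1..n}. 2)"
    by simp
  also have "\<dots> \<le> (\<Sum>k\<in>{1..n}. card (L k))"
    using card_L by (rule sum_mono)
  also have "\<dots> = card (\<Union>k\<in>{1..n}. L k)"
  proof (rule card_UN_disjoint[symmetric])
    show "\<forall>k\<in>{1..n}. finite (L k)"
      using assms(1) by (simp add: L_def)
    show "\<forall>k\<in>{1..n}. \<forall>j\<in>{1..n}. k \<noteq> j \<longrightarrow> L k \<inter> L j = {}"
    proof (intro ballI impI)
      fix k j assume "k \<in> {1..n}" "j \<in> {1..n}" "k \<noteq> j"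
      then show "L k \<inter> L j = {}"
        using atoms_disjoint[of "T k" "T j"] by (auto simp: L_def)
    qed
  qed simp
  also have "\<dots> \<le> card (fan x y)"
    using assms(1) by (intro card_mono) (auto simp: L_def)
  finally show ?thesis .
qed

end

theorem corollary7:
  fixes p n :: nat
  assumes "3 \<le> p" and "2 * n > p"
  shows "\<not> (\<exists>(U :: ('u \<times> 'u) set) h. representation p n U h)"
proof
  assume "\<exists>(U :: ('u \<times> 'u) set) h. representation p n U h"
  then obtain U :: "('u \<times> 'u) set" and h where "representation p n U h"
    by blast
  then interpret L_representation p n U h
    by unfold_locales
  have T1: "1 \<in> {1..n}"
    using assms by auto
  obtain x where "x \<in> Field U"
    using Field_nonempty by blast
  then obtain y where xy: "(x, y) \<in> h {T 1}"
    using T_exists T1 by blast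
  then obtain w where "(x, w) \<in> h {A 1}" "(w, y) \<in> h {T 1}"
    using T_factor_through_A[of 1 1 1 x y] T1 assms by auto
  then have "finite (fan x y)" "card (fan x y) \<le> p"
    using fan_finite_card_le T1 assms by auto
  moreover have "2 * n \<le> card (fan x y)"
    using fan_card_ge calculation(1) xy T1 by blast
  ultimately show False
    using assms by linarith
qed

end
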